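(* Let $\mathfrak{g}=sl(n)$, $G=GL(n)$ acting by conjugation, and let $r_{BD}$ be any Belavin–Drinfeld $r$-matrix for $sl(n,\overline{\mathbb{K}})$ (with respect to the diagonal Cartan subalgebra and upper triangular Borel). Then $C(r_{BD})\subseteq\mathrm{diag}(n,\overline{\mathbb{K}})$.
   Context: $\mathbb{K}=\mathbb{C}((\hbar))$, $\overline{\mathbb{K}}$ its algebraic closure. For $sl(n)$: Cartan $\mathfrak{h}$ = traceless diagonal matrices, simple roots $\alpha_i=\epsilon_i-\epsilon_{i+1}$ ($1\le i\le n-1$), root vector $e_{\epsilon_i-\epsilon_k}=e_{ik}$ (matrix unit), $\Omega=\sum_{i,k}e_{ik}\otimes e_{ki}-\frac1nI\otimes I$ with Cartan part $\Omega_0$. An admissible triple $(\Gamma_1,\Gamma_2,\tau)$: $\Gamma_1,\Gamma_2\subset\{\alpha_1,\dots,\alpha_{n-1}\}$, $\tau:\Gamma_1\to\Gamma_2$ an isometric bijection with every $\alpha\in\Gamma_1$ having some $\tau^k(\alpha)\notin\Gamma_1$; $\tau$ extended additively. A Belavin–Drinfeld $r$-matrix is $r_{BD}=r_0+\sum_{\alpha>0}e_\alpha\otimes e_{-\alpha}+\sum_{\beta\in(\mathbb{Z}\Gamma_1)^+}\sum_{k\ge1}e_\beta\wedge e_{-\tau^k(\beta)}$ where $r_0\in\mathfrak{h}(\overline{\mathbb{K}})^{\otimes2}$, $r_0+r_0^{21}=\Omega_0$, $(\tau(\alpha)\otimes1+1\otimes\alpha)(r_0)=0$ for $\alpha\in\Gamma_1$.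 $C(r)=\{X\in GL(n,\overline{\mathbb{K}}):(\mathrm{Ad}_X\otimes\mathrm{Ad}_X)(r)=r\}$, and $\mathrm{diag}(n,\overline{\mathbb{K}})$ is the group of invertible diagonal matrices. *)

theory Defs
  imports "Jordan_Normal_Form.Matrix"
          "HOL-Computational_Algebra.Formal_Laurent_Series"
          "HOL-Algebra.Algebraic_Closure_Type"
begin

(* \<K> = \<complex>((h)), Kbar its algebraic closure *)
type_synonym kbar = "complex fls alg_closure"

(* Indices are 0-based: matrix indices 0..n-1; the simple root alpha_{i+1} of the
   paper is  sroot i  for i in {0..<n-1}.  Weights are written in epsilon-coordinates
   as functions nat => int. *)
definition eps :: "nat \<Rightarrow> nat \<Rightarrow> int" where
  "eps i = (\<lambda>m. if m = i then 1 else 0)"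

definition sroot :: "nat \<Rightarrow> nat \<Rightarrow> int" where
  "sroot i = (\<lambda>m. eps i m - eps (Suc i) m)"

definition winner :: "nat \<Rightarrow> (nat \<Rightarrow> int) \<Rightarrow> (nat \<Rightarrow> int) \<Rightarrow> int" where
  "winner n u v = (\<Sum>m<n. u m * v m)"

definition admissible :: "nat \<Rightarrow> nat set \<Rightarrow> nat set \<Rightarrow> (nat \<Rightarrow> nat) \<Rightarrow> bool" where
  "admissible n \<Gamma>1 \<Gamma>2 \<tau> \<longleftrightarrow>
     \<Gamma>1 \<subseteq> {0..<n-1} \<and> \<Gamma>2 \<subseteq> {0..<n-1} \<and> bij_betw \<tau> \<Gamma>1 \<Gamma>2 \<and>
     (\<forall>i\<in>\<Gamma>1. \<forall>j\<in>\<Gamma>1. winner n (sroot (\<tau> i)) (sroot (\<tau> j)) = winner n (sroot i) (sroot j)) \<and>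
     (\<forall>i\<in>\<Gamma>1. \<exists>k. (\<tau> ^^ k) i \<notin> \<Gamma>1)"

definition zspan :: "nat set \<Rightarrow> (nat \<Rightarrow> int) set" where
  "zspan \<Gamma>1 = {v. \<exists>c. v = (\<lambda>m. \<Sum>j\<in>\<Gamma>1. c j * sroot j m)}"

(* additive extension of tau to the Z-span of Gamma1 (well defined since simple roots
   are linearly independent) *)
definition tau_ext :: "nat set \<Rightarrow> (nat \<Rightarrow> nat) \<Rightarrow> (nat \<Rightarrow> int) \<Rightarrow> (nat \<Rightarrow> int)" where
  "tau_ext \<Gamma>1 \<tau> v = (SOME w. \<exists>c. v = (\<lambda>m. \<Sum>j\<in>\<Gamma>1. c j * sroot j m) \<and>
                                   w = (\<lambda>m. \<Sum>j\<in>\<Gamma>1. c j * sroot (\<tau> j) m))"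

definition pos_roots :: "nat \<Rightarrow> (nat \<Rightarrow> int) set" where
  "pos_roots n = {(\<lambda>m. eps i m - eps k m) | i k. i < k \<and> k < n}"

(* root vector e_gamma (a matrix unit) as an n x n array; 0 if gamma is not a root *)
definition rootvec :: "nat \<Rightarrow> (nat \<Rightarrow> int) \<Rightarrow> nat \<Rightarrow> nat \<Rightarrow> kbar" where
  "rootvec n \<gamma> = (\<lambda>a b. if a < n \<and> b < n \<and> a \<noteq> b \<and> \<gamma> = (\<lambda>m. eps a m - eps b m) then 1 else 0)"

(* elements of gl(n) \<otimes> gl(n) as 4-index arrays: T i j k l = coefficient of e_ij \<otimes> e_kl *)
type_synonym tensor = "nat \<Rightarrow> nat \<Rightarrow> nat \<Rightarrow> nat \<Rightarrow> kbar"

definition tens :: "(nat \<Rightarrow> nat \<Rightarrow> kbar) \<Rightarrow> (nat \<Rightarrow> nat \<Rightarrow> kbar) \<Rightarrow> tensor" where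
  "tens A B = (\<lambda>i j k l. A i j * B k l)"

definition wedge :: "(nat \<Rightarrow> nat \<Rightarrow> kbar) \<Rightarrow> (nat \<Rightarrow> nat \<Rightarrow> kbar) \<Rightarrow> tensor" where
  "wedge A B = (\<lambda>i j k l. tens A B i j k l - tens B A i j k l)"

(* r_0 = \<Sum>_{i,k} c i k e_ii \<otimes> e_kk, with the Belavin-Drinfeld conditions on r_0 *)
definition r0_cond :: "nat \<Rightarrow> nat set \<Rightarrow> (nat \<Rightarrow> nat) \<Rightarrow> (nat \<Rightarrow> nat \<Rightarrow> kbar) \<Rightarrow> bool" where
  "r0_cond n \<Gamma>1 \<tau> c \<longleftrightarrow>
     \<comment> \<open>r_0 lies in h \<otimes> h (h = traceless diagonal matrices)\<close>
     (\<forall>k<n. (\<Sum>i<n. c i k) = 0) \<and> (\<forall>i<n. (\<Sum>k<n. c i k) = 0) \<and>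
     \<comment> \<open>r_0 + r_0^21 = Omega_0\<close>
     (\<forall>i<n. \<forall>k<n. c i k + c k i = (if i = k then 1 else 0) - 1 / of_nat n) \<and>
     \<comment> \<open>(tau(alpha) \<otimes> 1 + 1 \<otimes> alpha)(r_0) = 0 for alpha in Gamma1\<close>
     (\<forall>j\<in>\<Gamma>1. \<forall>m<n. (\<Sum>i<n. c i m * of_int (sroot (\<tau> j) i)) + (\<Sum>k<n. c m k * of_int (sroot j k)) = 0)"

definition r0_tensor :: "nat \<Rightarrow> (nat \<Rightarrow> nat \<Rightarrow> kbar) \<Rightarrow> tensor" where
  "r0_tensor n c = (\<lambda>i j k l. if i = j \<and> k = l \<and> i < n \<and> k < n then c i k else 0)"

(* pairs (beta, k) with beta in (Z Gamma1)^+, k >= 1 and tau^k(beta) defined *)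
definition bd_pairs :: "nat \<Rightarrow> nat set \<Rightarrow> (nat \<Rightarrow> nat) \<Rightarrow> ((nat \<Rightarrow> int) \<times> nat) set" where
  "bd_pairs n \<Gamma>1 \<tau> = {(\<beta>, k). \<beta> \<in> pos_roots n \<and> \<beta> \<in> zspan \<Gamma>1 \<and> 1 \<le> k \<and>
                          (\<forall>j<k. (tau_ext \<Gamma>1 \<tau> ^^ j) \<beta> \<in> zspan \<Gamma>1)}"

definition rBD :: "nat \<Rightarrow> nat set \<Rightarrow> (nat \<Rightarrow> nat) \<Rightarrow> (nat \<Rightarrow> nat \<Rightarrow> kbar) \<Rightarrow> tensor" where
  "rBD n \<Gamma>1 \<tau> c = (\<lambda>i j k l.
      r0_tensor n c i j k l
    + (\<Sum>\<beta>\<in>pos_roots n. tens (rootvec n \<beta>) (rootvec n (\<lambda>m. - \<beta> m)) i j k l)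
    + (\<Sum>p\<in>bd_pairs n \<Gamma>1 \<tau>. wedge (rootvec n (fst p))
           (rootvec n (\<lambda>m. - ((tau_ext \<Gamma>1 \<tau> ^^ snd p) (fst p)) m)) i j k l))"

(* (Ad_X \<otimes> Ad_X) T, where Y = X^{-1} *)
definition Ad2 :: "nat \<Rightarrow> kbar mat \<Rightarrow> kbar mat \<Rightarrow> tensor \<Rightarrow> tensor" where
  "Ad2 n A B T = (\<lambda>p q s t. if p < n \<and> q < n \<and> s < n \<and> t < n then
     (\<Sum>i<n. \<Sum>j<n. \<Sum>k<n. \<Sum>l<n. A $$ (p, i) * T i j k l * B $$ (j, q) * A $$ (s, k) * B $$ (l, t))
     else 0)"

definition centralizer :: "nat \<Rightarrow> tensor \<Rightarrow> kbar mat set" where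
  "centralizer n r = {A \<in> carrier_mat n n. \<exists>B \<in> carrier_mat n n.
      A * B = 1\<^sub>m n \<and> B * A = 1\<^sub>m n \<and> Ad2 n A B r = r}"

end

theory Submission
  imports Defs
begin

(* Contracting the first tensor factor of r = r_BD against a matrix x
   through the trace form gives a linear map  x |-> r(x)  on gl(n); invariance of r under
   Ad_X (x) Ad_X says exactly that this map commutes with conjugation by X (contract_conj).
   Entrywise (contract_rBD_entry), r(x) is: a Cartan term on the diagonal; x itself plus a
   "lower tail" on strictly lower entries; minus an "upper tail" on strictly upper entries.
   Each tail term comes from a summand e_beta /\ e_{-tau^k(beta)} and links the entry at the
   root beta with the one at tau^k(beta); since tau preserves the depth functional, the
   latter is again a positive root, and the length of its tau-string is strictly smaller
   (bd_len_image_less).  Grading entries by this length shows, by a generic descent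
   argument, that r is nilpotent on strictly upper matrices, r - id is nilpotent on strictly
   lower ones, and that r (resp. r - id) reflects vanishing of the lower (resp. upper) part.
   Hence for X in C(r) the conjugate X e_ab X^-1 of a matrix unit is triangular and square
   zero, so strictly triangular (conj_unit_above/below).  Applied to e_{a,a+1} and e_{a+1,a}
   this makes X both upper and lower triangular, i.e. diagonal. *)

section \<open>The roots of sl(n)\<close>

definition epsd :: "nat \<Rightarrow> nat \<Rightarrow> nat \<Rightarrow> int" where
  "epsd a b = (\<lambda>m. eps a m - eps b m)"

lemma epsd_apply: "epsd a b m = of_bool (m = a) - of_bool (m = b)"
  by (simp add: epsd_def eps_def)

lemma epsd_inj:
  assumes "a \<noteq> b" "c \<noteq> d" "epsd a b = epsd c d"
  shows "a = c \<and> b = d"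
proof -
  have "epsd a b a = epsd c d a" "epsd a b b = epsd c d b" using assms(3) by auto
  then show ?thesis using assms(1,2) by (auto simp: epsd_apply of_bool_def split: if_splits)
qed

lemma epsd_neg: "(\<lambda>m. - epsd a b m) = epsd b a"
  by (auto simp: epsd_def)

lemma sroot_epsd: "sroot j = epsd j (Suc j)"
  by (simp add: sroot_def epsd_def)

lemma pos_roots_epsd: "\<beta> \<in> pos_roots n \<longleftrightarrow> (\<exists>a b. a < b \<and> b < n \<and> \<beta> = epsd a b)"
  by (auto simp: pos_roots_def epsd_def)

lemma epsd_in_pos_roots:
  assumes "i \<noteq> j"
  shows "epsd i j \<in> pos_roots n \<longleftrightarrow> i < j \<and> j < n"
proof
  assume "epsd i j \<in> pos_roots n"
  then obtain a b where "a < b" "b < n" "epsd i j = epsd a b" by (auto simp: pos_roots_epsd)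
  with assms epsd_inj[of i j a b] show "i < j \<and> j < n" by auto
qed (auto simp: pos_roots_epsd)

lemma finite_pos_roots: "finite (pos_roots n)"
proof (rule finite_subset)
  show "pos_roots n \<subseteq> case_prod epsd ` ({..<n} \<times> {..<n})"
    by (force simp: pos_roots_epsd)
qed simp

lemma rootvec_eq: "rootvec n \<beta> i j = (if i < n \<and> j < n \<and> i \<noteq> j \<and> \<beta> = epsd i j then 1 else 0)"
  by (simp add: rootvec_def epsd_def)

lemma rootvec_nonzero: "rootvec n \<beta> i j \<noteq> 0 \<Longrightarrow> i < n \<and> j < n \<and> i \<noteq> j \<and> \<beta> = epsd i j"
  by (simp add: rootvec_eq split: if_splits)

section \<open>A functional preserved by \<open>\<tau>\<close>\<close>

text \<open>The depth \<open>\<Sum>\<^sub>m m v\<^sub>m\<close> of a weight is \<open>-1\<close> on every simple root, so the additive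
  extension of \<open>\<tau>\<close> preserves it.  This shows that \<open>-\<tau>\<^sup>k(\<beta>)\<close> is never a positive root.\<close>
definition depth :: "nat \<Rightarrow> (nat \<Rightarrow> int) \<Rightarrow> int" where
  "depth n v = (\<Sum>m<n. int m * v m)"

lemma depth_epsd:
  assumes "a < n" "b < n"
  shows "depth n (epsd a b) = int a - int b"
  using assms by (simp add: depth_def epsd_apply right_diff_distrib sum_subtractf)

lemma depth_simple_sum:
  assumes "finite G" "\<forall>j\<in>G. Suc (f j) < n"
  shows "depth n (\<lambda>m. \<Sum>j\<in>G. c j * sroot (f j) m) = - (\<Sum>j\<in>G. c j)"
proof -
  have "depth n (\<lambda>m. \<Sum>j\<in>G. c j * sroot (f j) m) = (\<Sum>j\<in>G. c j * depth n (sroot (f j)))"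
    unfolding depth_def sum_distrib_left by (subst sum.swap) (simp add: mult.left_commute)
  also have "\<dots> = (\<Sum>j\<in>G. - c j)"
    using assms(2) by (intro sum.cong) (auto simp: sroot_epsd depth_epsd)
  finally show ?thesis by (simp add: sum_negf)
qed

definition bd_image :: "nat set \<Rightarrow> (nat \<Rightarrow> nat) \<Rightarrow> (nat \<Rightarrow> int) \<times> nat \<Rightarrow> nat \<Rightarrow> int" where
  "bd_image \<Gamma>1 \<tau> p = (tau_ext \<Gamma>1 \<tau> ^^ snd p) (fst p)"

text \<open>It is the grading that makes
  the tail of \<open>r\<^sub>B\<^sub>D\<close> nilpotent.\<close>
definition bd_len :: "nat \<Rightarrow> nat set \<Rightarrow> (nat \<Rightarrow> nat) \<Rightarrow> (nat \<Rightarrow> int) \<Rightarrow> nat" where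
  "bd_len n \<Gamma>1 \<tau> \<beta> = card {k. (\<beta>, k) \<in> bd_pairs n \<Gamma>1 \<tau>}"

lemma bd_len_bounded: "\<exists>N. \<forall>s<n. \<forall>t<n. bd_len n \<Gamma>1 \<tau> (epsd s t) < N"
proof -
  let ?N = "Suc (Max ((\<lambda>(s, t). bd_len n \<Gamma>1 \<tau> (epsd s t)) ` ({..<n} \<times> {..<n})))"
  have "bd_len n \<Gamma>1 \<tau> (epsd s t) < ?N" if "s < n" "t < n" for s t
    using that by (intro le_imp_less_Suc Max_ge) auto
  then show ?thesis by blast
qed

lemma bd_pair_root:
  assumes "p \<in> bd_pairs n \<Gamma>1 \<tau>" "rootvec n (fst p) i j \<noteq> 0"
  shows "i < j \<and> fst p = epsd i j"
proof -
  from rootvec_nonzero[OF assms(2)] have "i \<noteq> j" "fst p = epsd i j" by auto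
  moreover have "fst p \<in> pos_roots n" using assms(1) by (auto simp: bd_pairs_def)
  ultimately show ?thesis using epsd_in_pos_roots by auto
qed

section \<open>Contracting a tensor against a matrix\<close>

definition trace_pair :: "nat \<Rightarrow> (nat \<Rightarrow> nat \<Rightarrow> kbar) \<Rightarrow> kbar mat \<Rightarrow> kbar" where
  "trace_pair n P x = (\<Sum>i<n. \<Sum>j<n. P i j * x $$ (j,i))"

text \<open>Contracting the first factor of \<open>T \<in> gl(n) \<otimes> gl(n)\<close> against \<open>x\<close> through the trace form
  turns \<open>T\<close> into the linear map \<open>x \<mapsto> (tr \<otimes> id)(T (x \<otimes> 1))\<close> of \<open>gl(n)\<close>.\<close>
definition contract :: "nat \<Rightarrow> tensor \<Rightarrow> kbar mat \<Rightarrow> kbar mat" where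
  "contract n T x = mat n n (\<lambda>(s,t). \<Sum>i<n. \<Sum>j<n. T i j s t * x $$ (j,i))"

lemma contract_carrier [simp]: "contract n T x \<in> carrier_mat n n"
  by (simp add: contract_def)

lemma contract_entry:
  "s < n \<Longrightarrow> t < n \<Longrightarrow> contract n T x $$ (s,t) = (\<Sum>i<n. \<Sum>j<n. T i j s t * x $$ (j,i))"
  by (simp add: contract_def)

lemma trace_pair_nonzero:
  assumes "trace_pair n P x \<noteq> 0"
  shows "\<exists>i<n. \<exists>j<n. P i j \<noteq> 0 \<and> x $$ (j,i) \<noteq> 0"
proof -
  obtain i where i: "i < n" "(\<Sum>j<n. P i j * x $$ (j,i)) \<noteq> 0"
    using sum.not_neutral_contains_not_neutral[OF assms[unfolded trace_pair_def]] by auto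
  obtain j where "j < n" "P i j * x $$ (j,i) \<noteq> 0"
    using sum.not_neutral_contains_not_neutral[OF i(2)] by auto
  with i(1) show ?thesis by auto
qed

section \<open>The contraction of \<open>r\<^sub>B\<^sub>D\<close>\<close>

text \<open>The two tails that the Belavin-Drinfeld terms \<open>e\<^sub>\<beta> \<and> e\<^bsub>-\<tau>\<^sup>k(\<beta>)\<^esub>\<close> contribute to the
  contraction: the first lands in strictly lower, the second in strictly upper entries.\<close>
definition bd_low :: "nat \<Rightarrow> nat set \<Rightarrow> (nat \<Rightarrow> nat) \<Rightarrow> kbar mat \<Rightarrow> nat \<Rightarrow> nat \<Rightarrow> kbar" where
  "bd_low n \<Gamma>1 \<tau> x s t = (\<Sum>p\<in>bd_pairs n \<Gamma>1 \<tau>.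
     trace_pair n (rootvec n (fst p)) x * rootvec n (\<lambda>m. - bd_image \<Gamma>1 \<tau> p m) s t)"

definition bd_up :: "nat \<Rightarrow> nat set \<Rightarrow> (nat \<Rightarrow> nat) \<Rightarrow> kbar mat \<Rightarrow> nat \<Rightarrow> nat \<Rightarrow> kbar" where
  "bd_up n \<Gamma>1 \<tau> x s t = (\<Sum>p\<in>bd_pairs n \<Gamma>1 \<tau>.
     trace_pair n (rootvec n (\<lambda>m. - bd_image \<Gamma>1 \<tau> p m)) x * rootvec n (fst p) s t)"

lemma contract_r0:
  assumes "s < n" "t < n"
  shows "(\<Sum>i<n. \<Sum>j<n. r0_tensor n c i j s t * x $$ (j,i))
       = (if s = t then \<Sum>i<n. c i s * x $$ (i,i) else 0)"
proof -
  have "(\<Sum>j<n. r0_tensor n c i j s t * x $$ (j,i))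
      = (\<Sum>j<n. if j = i then (if s = t then c i s * x $$ (i,i) else 0) else 0)" if "i < n" for i
    using assms that by (intro sum.cong) (auto simp: r0_tensor_def)
  then show ?thesis by (cases "s = t") simp_all
qed

lemma casimir_coeff:
  assumes "s < n" "t < n"
  shows "(\<Sum>\<beta>\<in>pos_roots n. tens (rootvec n \<beta>) (rootvec n (\<lambda>m. - \<beta> m)) i j s t)
       = (if i = t \<and> j = s \<and> t < s then 1 else 0)"
proof -
  let ?u = "if i < n \<and> j < n \<and> i \<noteq> j then rootvec n (epsd j i) s t else 0"
  have "(\<Sum>\<beta>\<in>pos_roots n. tens (rootvec n \<beta>) (rootvec n (\<lambda>m. - \<beta> m)) i j s t)
      = (\<Sum>\<beta>\<in>pos_roots n. if \<beta> = epsd i j then ?u else 0)"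
    by (intro sum.cong) (auto simp: tens_def rootvec_eq[of n _ i j] epsd_neg)
  also have "\<dots> = (if epsd i j \<in> pos_roots n then ?u else 0)"
    using finite_pos_roots by (simp only: sum.delta)
  also have "\<dots> = (if i = t \<and> j = s \<and> t < s then 1 else 0)"
    using assms epsd_inj[of j i s t] by (auto simp: rootvec_eq epsd_in_pos_roots)
  finally show ?thesis .
qed

lemma contract_casimir:
  assumes "s < n" "t < n"
  shows "(\<Sum>i<n. \<Sum>j<n. (\<Sum>\<beta>\<in>pos_roots n. tens (rootvec n \<beta>) (rootvec n (\<lambda>m. - \<beta> m)) i j s t) * x $$ (j,i))
       = (if t < s then x $$ (s,t) else 0)"
proof -
  have "(\<Sum>j<n. (if i = t \<and> j = s \<and> t < s then 1 else 0) * x $$ (j,i))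
      = (\<Sum>j<n. if j = s then (if i = t then (if t < s then x $$ (s,t) else 0) else 0) else 0)" for i
    by (intro sum.cong) auto
  then show ?thesis using assms by (simp add: casimir_coeff sum.delta)
qed

lemma contract_bd_tail:
  "(\<Sum>i<n. \<Sum>j<n. (\<Sum>p\<in>bd_pairs n \<Gamma>1 \<tau>.
       wedge (rootvec n (fst p)) (rootvec n (\<lambda>m. - bd_image \<Gamma>1 \<tau> p m)) i j s t) * x $$ (j,i))
   = bd_low n \<Gamma>1 \<tau> x s t - bd_up n \<Gamma>1 \<tau> x s t"
proof -
  let ?P = "\<lambda>p. rootvec n (fst p)" and ?Q = "\<lambda>p. rootvec n (\<lambda>m. - bd_image \<Gamma>1 \<tau> p m)"
  have "(\<Sum>i<n. \<Sum>j<n. (\<Sum>p\<in>bd_pairs n \<Gamma>1 \<tau>. wedge (?P p) (?Q p) i j s t) * x $$ (j,i))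
      = (\<Sum>i<n. \<Sum>j<n. \<Sum>p\<in>bd_pairs n \<Gamma>1 \<tau>.
           ?P p i j * x $$ (j,i) * ?Q p s t - ?Q p i j * x $$ (j,i) * ?P p s t)"
    unfolding wedge_def tens_def sum_distrib_right by (intro sum.cong refl) (simp add: algebra_simps)
  also have "\<dots> = (\<Sum>p\<in>bd_pairs n \<Gamma>1 \<tau>. \<Sum>i<n. \<Sum>j<n.
           ?P p i j * x $$ (j,i) * ?Q p s t - ?Q p i j * x $$ (j,i) * ?P p s t)"
    by (subst sum.swap) (simp add: sum.swap[of _ "{..<n}" "bd_pairs n \<Gamma>1 \<tau>"])
  also have "\<dots> = bd_low n \<Gamma>1 \<tau> x s t - bd_up n \<Gamma>1 \<tau> x s t"
    by (simp add: bd_low_def bd_up_def trace_pair_def sum_subtractf sum_distrib_right)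
  finally show ?thesis .
qed

lemma contract_rBD_entry:
  assumes "s < n" "t < n"
  shows "contract n (rBD n \<Gamma>1 \<tau> c) x $$ (s,t)
       = (if s = t then \<Sum>i<n. c i s * x $$ (i,i) else 0) + (if t < s then x $$ (s,t) else 0)
         + (bd_low n \<Gamma>1 \<tau> x s t - bd_up n \<Gamma>1 \<tau> x s t)"
proof -
  have "contract n (rBD n \<Gamma>1 \<tau> c) x $$ (s,t)
      = (\<Sum>i<n. \<Sum>j<n. r0_tensor n c i j s t * x $$ (j,i))
        + (\<Sum>i<n. \<Sum>j<n. (\<Sum>\<beta>\<in>pos_roots n. tens (rootvec n \<beta>) (rootvec n (\<lambda>m. - \<beta> m)) i j s t) * x $$ (j,i))
        + (\<Sum>i<n. \<Sum>j<n. (\<Sum>p\<in>bd_pairs n \<Gamma>1 \<tau>.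
             wedge (rootvec n (fst p)) (rootvec n (\<lambda>m. - bd_image \<Gamma>1 \<tau> p m)) i j s t) * x $$ (j,i))"
    using assms by (simp add: contract_entry rBD_def bd_image_def distrib_right sum.distrib)
  then show ?thesis using assms by (simp add: contract_r0 contract_casimir contract_bd_tail)
qed

section \<open>Vanishing of matrix entries by descent\<close>

definition below :: "nat \<Rightarrow> (nat \<times> nat) set" where
  "below n = {(s,t). t < s \<and> s < n}"

definition above :: "nat \<Rightarrow> (nat \<times> nat) set" where
  "above n = {(s,t). s < t \<and> t < n}"

definition diag_pos :: "nat \<Rightarrow> (nat \<times> nat) set" where
  "diag_pos n = {(i,i) | i. i < n}"

definition vanishes_on :: "(nat \<times> nat) set \<Rightarrow> 'a::zero mat \<Rightarrow> bool" where
  "vanishes_on S x \<longleftrightarrow> (\<forall>q\<in>S. x $$ q = 0)"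

lemma vanishes_on_Un: "vanishes_on (S \<union> T) x \<longleftrightarrow> vanishes_on S x \<and> vanishes_on T x"
  by (auto simp: vanishes_on_def)

lemma zero_mat_by_positions:
  assumes "x \<in> carrier_mat n n" "vanishes_on (below n \<union> diag_pos n \<union> above n) x"
  shows "x = 0\<^sub>m n n"
proof (rule eq_matI)
  fix i j assume "i < dim_row (0\<^sub>m n n :: 'a mat)" "j < dim_col (0\<^sub>m n n :: 'a mat)"
  then show "x $$ (i,j) = 0\<^sub>m n n $$ (i,j)"
    using assms(2) by (cases i j rule: linorder_cases)
      (auto simp: vanishes_on_def below_def above_def diag_pos_def)
qed (use assms(1) in auto)

lemma diagonal_by_positions:
  assumes "x \<in> carrier_mat n n" "vanishes_on (below n \<union> above n) x"
  shows "diagonal_mat x"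
  unfolding diagonal_mat_def
proof (intro allI impI)
  fix i j assume "i < dim_row x" "j < dim_col x" "i \<noteq> j"
  then show "x $$ (i,j) = 0"
    using assms by (cases "i < j") (auto simp: vanishes_on_def below_def above_def)
qed

lemma vanishes_on_by_descent:
  fixes z :: "'a::zero mat" and \<mu> :: "nat \<times> nat \<Rightarrow> nat"
  assumes descent: "\<And>q. q \<in> S \<Longrightarrow> z $$ q \<noteq> 0 \<Longrightarrow> \<exists>q'\<in>S. z $$ q' \<noteq> 0 \<and> \<mu> q' < \<mu> q"
  shows "vanishes_on S z"
proof -
  have "q \<in> S \<longrightarrow> z $$ q = 0" for q
    by (rule infinite_descent_measure[where V = \<mu>]) (use descent in blast)
  then show ?thesis by (auto simp: vanishes_on_def)
qed

lemma iterate_vanishes_on: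
  fixes F :: "'a::zero mat \<Rightarrow> 'a mat" and \<mu> :: "nat \<times> nat \<Rightarrow> nat"
  assumes inv: "\<And>x. I x \<Longrightarrow> I (F x)"
    and raise: "\<And>x q. I x \<Longrightarrow> q \<in> S \<Longrightarrow> F x $$ q \<noteq> 0 \<Longrightarrow> \<exists>q'\<in>S. x $$ q' \<noteq> 0 \<and> \<mu> q' < \<mu> q"
    and bound: "\<And>q. q \<in> S \<Longrightarrow> \<mu> q < N"
    and "I x"
  shows "I ((F ^^ N) x) \<and> vanishes_on S ((F ^^ N) x)"
proof -
  have "I ((F ^^ k) x) \<and> (\<forall>q\<in>S. (F ^^ k) x $$ q \<noteq> 0 \<longrightarrow> k \<le> \<mu> q)" for k
  proof (induction k)
    case 0
    show ?case using \<open>I x\<close> by simp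
  next
    case (Suc k)
    then have I: "I ((F ^^ k) x)" by blast
    have "Suc k \<le> \<mu> q" if q: "q \<in> S" and nz: "(F ^^ Suc k) x $$ q \<noteq> 0" for q
    proof -
      obtain q' where "q' \<in> S" "(F ^^ k) x $$ q' \<noteq> 0" "\<mu> q' < \<mu> q"
        using raise[OF I q] nz by auto
      with Suc.IH show ?thesis by fastforce
    qed
    then show ?case using inv[OF I] by simp
  qed
  from this[of N] show ?thesis using bound by (fastforce simp: vanishes_on_def)
qed

lemma funpow_reflects:
  assumes closed: "\<And>x. x \<in> C \<Longrightarrow> F x \<in> C" and reflect: "\<And>x. x \<in> C \<Longrightarrow> P (F x) \<Longrightarrow> P x"
  shows "x \<in> C \<Longrightarrow> P ((F ^^ k) x) \<Longrightarrow> P x"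
proof (induction k arbitrary: x)
  case (Suc k)
  then show ?case using closed reflect by (simp add: funpow_Suc_right del: funpow.simps)
qed simp

lemma funpow_commute_on:
  assumes closed: "\<And>x. x \<in> C \<Longrightarrow> F x \<in> C" and commute: "\<And>x. x \<in> C \<Longrightarrow> F (g x) = g (F x)"
  shows "x \<in> C \<Longrightarrow> (F ^^ k) (g x) = g ((F ^^ k) x)"
proof (induction k)
  case (Suc k)
  have "(F ^^ k) x \<in> C" using closed Suc.prems by (induction k) auto
  then show ?case using Suc commute by simp
qed simp

lemma mult_mat_entry:
  fixes M N :: "'a::semiring_0 mat"
  assumes "M \<in> carrier_mat a m" "N \<in> carrier_mat m b" "i < a" "j < b"
  shows "(M * N) $$ (i,j) = (\<Sum>k<m. M $$ (i,k) * N $$ (k,j))"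
  using assms by (auto simp: scalar_prod_def lessThan_atLeast0 intro!: sum.cong)

lemma conj_entry:
  fixes A B Y :: "'a::comm_semiring_1 mat"
  assumes A: "A \<in> carrier_mat n n" and B: "B \<in> carrier_mat n n" and Y: "Y \<in> carrier_mat n n"
    and "a < n" "b < n"
  shows "(B * Y * A) $$ (b,a) = (\<Sum>i<n. \<Sum>j<n. A $$ (i,a) * B $$ (b,j) * Y $$ (j,i))"
proof -
  have "(B * Y * A) $$ (b,a) = (\<Sum>i<n. (B * Y) $$ (b,i) * A $$ (i,a))"
    using assms by (intro mult_mat_entry) auto
  also have "\<dots> = (\<Sum>i<n. (\<Sum>j<n. B $$ (b,j) * Y $$ (j,i)) * A $$ (i,a))"
    using assms by (intro sum.cong refl) (simp add: mult_mat_entry[OF B Y] del: index_mult_mat)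
  also have "\<dots> = (\<Sum>i<n. \<Sum>j<n. A $$ (i,a) * B $$ (b,j) * Y $$ (j,i))"
    by (simp add: sum_distrib_right sum_distrib_left mult_ac)
  finally show ?thesis .
qed

lemma sum_swap_outer:
  "(\<Sum>i\<in>I. \<Sum>j\<in>J. \<Sum>a\<in>K. (f i j a :: 'a::comm_monoid_add)) = (\<Sum>a\<in>K. \<Sum>i\<in>I. \<Sum>j\<in>J. f i j a)"
  by (simp add: sum.swap[of _ J K] sum.swap[of _ I K])

lemma sum_swap_outer6:
  "(\<Sum>i\<in>I. \<Sum>j\<in>J. \<Sum>a\<in>K1. \<Sum>b\<in>K2. \<Sum>k\<in>K3. \<Sum>l\<in>K4. (f i j a b k l :: 'a::comm_monoid_add))
   = (\<Sum>a\<in>K1. \<Sum>b\<in>K2. \<Sum>k\<in>K3. \<Sum>l\<in>K4. \<Sum>i\<in>I. \<Sum>j\<in>J. f i j a b k l)"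
proof -
  have "(\<Sum>i\<in>I. \<Sum>j\<in>J. \<Sum>a\<in>K1. \<Sum>b\<in>K2. \<Sum>k\<in>K3. \<Sum>l\<in>K4. f i j a b k l)
      = (\<Sum>a\<in>K1. \<Sum>i\<in>I. \<Sum>j\<in>J. \<Sum>b\<in>K2. \<Sum>k\<in>K3. \<Sum>l\<in>K4. f i j a b k l)"
    by (rule sum_swap_outer)
  also have "\<dots> = (\<Sum>a\<in>K1. \<Sum>b\<in>K2. \<Sum>i\<in>I. \<Sum>j\<in>J. \<Sum>k\<in>K3. \<Sum>l\<in>K4. f i j a b k l)"
    by (rule sum.cong[OF refl], rule sum_swap_outer)
  also have "\<dots> = (\<Sum>a\<in>K1. \<Sum>b\<in>K2. \<Sum>k\<in>K3. \<Sum>i\<in>I. \<Sum>j\<in>J. \<Sum>l\<in>K4. f i j a b k l)"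
    by (rule sum.cong[OF refl], rule sum.cong[OF refl], rule sum_swap_outer)
  also have "\<dots> = (\<Sum>a\<in>K1. \<Sum>b\<in>K2. \<Sum>k\<in>K3. \<Sum>l\<in>K4. \<Sum>i\<in>I. \<Sum>j\<in>J. f i j a b k l)"
    by (rule sum.cong[OF refl], rule sum.cong[OF refl], rule sum.cong[OF refl], rule sum_swap_outer)
  finally show ?thesis .
qed

lemma sum_reverse_outer4:
  "(\<Sum>a\<in>A. \<Sum>b\<in>B. \<Sum>k\<in>K. \<Sum>l\<in>L. (f a b k l :: 'a::comm_monoid_add))
   = (\<Sum>l\<in>L. \<Sum>k\<in>K. \<Sum>a\<in>A. \<Sum>b\<in>B. f a b k l)"
proof -
  have "(\<Sum>l\<in>L. \<Sum>k\<in>K. \<Sum>a\<in>A. \<Sum>b\<in>B. f a b k l) = (\<Sum>a\<in>A. \<Sum>l\<in>L. \<Sum>k\<in>K. \<Sum>b\<in>B. f a b k l)"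
    by (rule sum_swap_outer)
  also have "\<dots> = (\<Sum>a\<in>A. \<Sum>b\<in>B. \<Sum>l\<in>L. \<Sum>k\<in>K. f a b k l)"
    by (rule sum.cong[OF refl], rule sum_swap_outer)
  also have "\<dots> = (\<Sum>a\<in>A. \<Sum>b\<in>B. \<Sum>k\<in>K. \<Sum>l\<in>L. f a b k l)"
    by (rule sum.cong[OF refl], rule sum.cong[OF refl], rule sum.swap)
  finally show ?thesis by simp
qed

lemma contract_conj:
  fixes T :: tensor
  assumes A: "A \<in> carrier_mat n n" and B: "B \<in> carrier_mat n n" and BA: "B * A = 1\<^sub>m n"
    and inv: "Ad2 n A B T = T" and x: "x \<in> carrier_mat n n"
  shows "contract n T (A * x * B) = A * contract n T x * B"
proof (rule eq_matI)
  fix s t assume "s < dim_row (A * contract n T x * B)" "t < dim_col (A * contract n T x * B)"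
  then have st: "s < n" "t < n" using A B by auto
  define Y where "Y = A * x * B"
  have Y: "Y \<in> carrier_mat n n" using A B x by (simp add: Y_def)
  have T: "T i j s t = (\<Sum>a<n. \<Sum>b<n. \<Sum>k<n. \<Sum>l<n.
      A $$ (i,a) * T a b k l * B $$ (b,j) * A $$ (s,k) * B $$ (l,t))" if "i < n" "j < n" for i j
    using fun_cong[OF fun_cong[OF fun_cong[OF fun_cong[OF inv, of i], of j], of s], of t] that st
    by (simp add: Ad2_def)
  have "B * Y * A = (B * A) * x * (B * A)"
    using A B x by (simp add: Y_def assoc_mult_mat[of _ n n _ n _ n])
  then have BYA: "B * Y * A = x" using BA x by simp
  have undo: "(\<Sum>i<n. \<Sum>j<n. A $$ (i,a) * B $$ (b,j) * Y $$ (j,i)) = x $$ (b,a)"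
    if "a < n" "b < n" for a b
    using conj_entry[OF A B Y that] BYA by simp
  have "contract n T Y $$ (s,t) = (\<Sum>i<n. \<Sum>j<n. T i j s t * Y $$ (j,i))"
    using st by (simp add: contract_entry)
  also have "\<dots> = (\<Sum>i<n. \<Sum>j<n. \<Sum>a<n. \<Sum>b<n. \<Sum>k<n. \<Sum>l<n.
      (T a b k l * A $$ (s,k) * B $$ (l,t)) * (A $$ (i,a) * B $$ (b,j) * Y $$ (j,i)))"
    by (intro sum.cong refl) (simp add: T sum_distrib_right sum_distrib_left mult_ac)
  also have "\<dots> = (\<Sum>a<n. \<Sum>b<n. \<Sum>k<n. \<Sum>l<n. \<Sum>i<n. \<Sum>j<n.
      (T a b k l * A $$ (s,k) * B $$ (l,t)) * (A $$ (i,a) * B $$ (b,j) * Y $$ (j,i)))"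
    by (rule sum_swap_outer6)
  also have "\<dots> = (\<Sum>a<n. \<Sum>b<n. \<Sum>k<n. \<Sum>l<n. (T a b k l * A $$ (s,k) * B $$ (l,t)) * x $$ (b,a))"
    by (intro sum.cong refl) (simp add: sum_distrib_left[symmetric] undo)
  also have "\<dots> = (\<Sum>l<n. \<Sum>k<n. \<Sum>a<n. \<Sum>b<n. (T a b k l * A $$ (s,k) * B $$ (l,t)) * x $$ (b,a))"
    by (rule sum_reverse_outer4)
  also have "\<dots> = (\<Sum>l<n. (\<Sum>k<n. A $$ (s,k) * contract n T x $$ (k,l)) * B $$ (l,t))"
    by (intro sum.cong refl) (simp add: contract_entry sum_distrib_left sum_distrib_right mult_ac)
  also have "\<dots> = (A * contract n T x * B) $$ (s,t)"
    using A B st by (simp add: mult_mat_entry[of _ n n _ n] mult_mat_entry[OF A contract_carrier]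
        del: index_mult_mat)
  finally show "contract n T (A * x * B) $$ (s,t) = (A * contract n T x * B) $$ (s,t)"
    by (simp add: Y_def)
qed (use A B in \<open>auto simp: contract_def\<close>)

definition emat :: "nat \<Rightarrow> nat \<Rightarrow> nat \<Rightarrow> 'a::zero_neq_one mat" where
  "emat n a b = mat n n (\<lambda>(i,j). if i = a \<and> j = b then 1 else 0)"

lemma emat_carrier [simp]: "emat n a b \<in> carrier_mat n n"
  by (simp add: emat_def)

lemma emat_index: "i < n \<Longrightarrow> j < n \<Longrightarrow> emat n a b $$ (i,j) = (if i = a \<and> j = b then 1 else 0)"
  by (simp add: emat_def)

lemma emat_square:
  assumes "a \<noteq> b"
  shows "emat n a b * emat n a b = (0\<^sub>m n n :: 'a::semiring_1 mat)"
proof (rule eq_matI)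
  fix i j assume ij: "i < dim_row (0\<^sub>m n n :: 'a mat)" "j < dim_col (0\<^sub>m n n :: 'a mat)"
  have "(emat n a b * emat n a b :: 'a mat) $$ (i,j) = (\<Sum>k<n. emat n a b $$ (i,k) * emat n a b $$ (k,j))"
    using ij by (intro mult_mat_entry) auto
  also have "\<dots> = 0" using ij assms by (intro sum.neutral) (auto simp: emat_index)
  finally show "(emat n a b * emat n a b :: 'a mat) $$ (i,j) = 0\<^sub>m n n $$ (i,j)" using ij by simp
qed (auto simp: emat_def)

lemma mult_emat_column:
  fixes A :: "'a::semiring_1 mat"
  assumes "A \<in> carrier_mat n n" "a < n" "b < n" "i < n"
  shows "(A * emat n a b) $$ (i,b) = A $$ (i,a)"
proof -
  have "(A * emat n a b) $$ (i,b) = (\<Sum>k<n. A $$ (i,k) * emat n a b $$ (k,b))"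
    using assms by (intro mult_mat_entry) auto
  also have "\<dots> = (\<Sum>k<n. if k = a then A $$ (i,a) else 0)"
    using assms by (intro sum.cong) (auto simp: emat_index)
  finally show ?thesis using assms by simp
qed

lemma conj_square_zero:
  fixes A B E :: "'a::semiring_1 mat"
  assumes A: "A \<in> carrier_mat n n" and B: "B \<in> carrier_mat n n" and BA: "B * A = 1\<^sub>m n"
    and E: "E \<in> carrier_mat n n" and EE: "E * E = 0\<^sub>m n n"
  shows "(A * E * B) * (A * E * B) = 0\<^sub>m n n"
proof -
  have "(A * E * B) * (A * E * B) = A * (E * (B * A) * E) * B"
    using A B E by (simp add: assoc_mult_mat[of _ n n _ n _ n])
  also have "\<dots> = 0\<^sub>m n n" using A B E EE BA by simp
  finally show ?thesis .
qed

lemma square_zero_triangular_diag: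
  fixes y :: "'a::idom mat"
  assumes y: "y \<in> carrier_mat n n" and yy: "y * y = 0\<^sub>m n n"
    and tri: "vanishes_on (below n) y \<or> vanishes_on (above n) y"
  shows "vanishes_on (diag_pos n) y"
  unfolding vanishes_on_def diag_pos_def
proof clarify
  fix i assume i: "i < n"
  have off: "y $$ (i,k) * y $$ (k,i) = 0" if "k < n" "k \<noteq> i" for k
    using tri that i by (cases "k < i") (auto simp: vanishes_on_def below_def above_def)
  have "0 = (y * y) $$ (i,i)" using yy i by simp
  also have "\<dots> = (\<Sum>k<n. y $$ (i,k) * y $$ (k,i))" using y i by (intro mult_mat_entry) auto
  also have "\<dots> = y $$ (i,i) * y $$ (i,i) + (\<Sum>k\<in>{..<n} - {i}. y $$ (i,k) * y $$ (k,i))"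
    using i by (simp add: sum.remove)
  also have "(\<Sum>k\<in>{..<n} - {i}. y $$ (i,k) * y $$ (k,i)) = 0"
    using off by (intro sum.neutral) auto
  finally show "y $$ (i,i) = 0" by simp
qed

lemma upper_triangular_by_shift:
  fixes A :: "'a::semiring_0 mat"
  assumes A: "A \<in> carrier_mat n n"
    and shift: "\<And>a. Suc a < n \<Longrightarrow> \<exists>y\<in>carrier_mat n n. vanishes_on (below n \<union> diag_pos n) y \<and>
                  (\<forall>i<n. A $$ (i,a) = (y * A) $$ (i, Suc a))"
  shows "vanishes_on (below n) A"
proof -
  have "A $$ (i,j) = 0" if "j < i" "i < n" for i j
    using that
  proof (induction "n - j" arbitrary: i j rule: less_induct)
    case less
    then obtain y where y: "y \<in> carrier_mat n n" "vanishes_on (below n \<union> diag_pos n) y"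
      and col: "A $$ (i,j) = (y * A) $$ (i, Suc j)" using shift[of j] by auto
    have "y $$ (i,l) * A $$ (l, Suc j) = 0" if "l < n" for l
    proof (cases "l \<le> i")
      case True
      then have "(i,l) \<in> below n \<union> diag_pos n" using less.prems that by (auto simp: below_def diag_pos_def)
      then show ?thesis using y(2) by (simp add: vanishes_on_def)
    next
      case False
      then show ?thesis using less that by simp
    qed
    then show ?case using col y(1) A less.prems by (simp add: mult_mat_entry[OF y(1) A] del: index_mult_mat)
  qed
  then show ?thesis by (auto simp: vanishes_on_def below_def)
qed

lemma lower_triangular_by_shift:
  fixes A :: "'a::semiring_0 mat"
  assumes A: "A \<in> carrier_mat n n"
    and shift: "\<And>a. Suc a < n \<Longrightarrow> \<exists>y\<in>carrier_mat n n. vanishes_on (above n \<union> diag_pos n) y \<and>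
                  (\<forall>i<n. A $$ (i, Suc a) = (y * A) $$ (i,a))"
  shows "vanishes_on (above n) A"
proof -
  have "A $$ (i,j) = 0" if "i < j" "j < n" for i j
    using that
  proof (induction j arbitrary: i)
    case (Suc a)
    then obtain y where y: "y \<in> carrier_mat n n" "vanishes_on (above n \<union> diag_pos n) y"
      and col: "A $$ (i, Suc a) = (y * A) $$ (i,a)" using shift[of a] by auto
    have "y $$ (i,l) * A $$ (l,a) = 0" if "l < n" for l
    proof (cases "i \<le> l")
      case True
      then have "(i,l) \<in> above n \<union> diag_pos n" using that by (auto simp: above_def diag_pos_def)
      then show ?thesis using y(2) by (simp add: vanishes_on_def)
    next
      case False
      then show ?thesis using Suc that by simp
    qed
    then show ?case using col y(1) A Suc.prems by (simp add: mult_mat_entry[OF y(1) A] del: index_mult_mat)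
  qed simp
  then show ?thesis by (auto simp: vanishes_on_def above_def)
qed

section \<open>The Belavin-Drinfeld tails and their nilpotency\<close>

text \<open>Throughout, \<open>\<Gamma>\<^sub>1\<close> and \<open>\<tau>(\<Gamma>\<^sub>1)\<close> consist of simple roots of sl(n); this is all of admissibility
  that the argument uses.\<close>
context
  fixes n :: nat and \<Gamma>1 :: "nat set" and \<tau> :: "nat \<Rightarrow> nat"
  assumes simple_dom: "\<Gamma>1 \<subseteq> {0..<n-1}" and simple_ran: "\<tau> ` \<Gamma>1 \<subseteq> {0..<n-1}"
begin

lemma tau_ext_depth:
  assumes "v \<in> zspan \<Gamma>1"
  shows "depth n (tau_ext \<Gamma>1 \<tau> v) = depth n v"
proof -
  let ?P = "\<lambda>w c. v = (\<lambda>m. \<Sum>j\<in>\<Gamma>1. c j * sroot j m) \<and> w = (\<lambda>m. \<Sum>j\<in>\<Gamma>1. c j * sroot (\<tau> j) m)"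
  from assms obtain c where "v = (\<lambda>m. \<Sum>j\<in>\<Gamma>1. c j * sroot j m)" by (auto simp: zspan_def)
  then have "\<exists>w c. ?P w c" by blast
  then obtain c where c: "?P (tau_ext \<Gamma>1 \<tau> v) c"
    unfolding tau_ext_def by (rule someI_ex[where P = "\<lambda>w. \<exists>c. ?P w c", THEN exE])
  have fin: "finite \<Gamma>1" using simple_dom finite_subset by blast
  have dom: "\<forall>j\<in>\<Gamma>1. Suc j < n" and ran: "\<forall>j\<in>\<Gamma>1. Suc (\<tau> j) < n"
    using simple_dom simple_ran by fastforce+
  have "depth n v = - (\<Sum>j\<in>\<Gamma>1. c j)"
    unfolding conjunct1[OF c] using depth_simple_sum[OF fin, of "\<lambda>j. j" n c] dom by simp
  moreover have "depth n (tau_ext \<Gamma>1 \<tau> v) = - (\<Sum>j\<in>\<Gamma>1. c j)"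
    unfolding conjunct2[OF c] by (rule depth_simple_sum[OF fin ran])
  ultimately show ?thesis by simp
qed

lemma bd_image_depth:
  assumes "p \<in> bd_pairs n \<Gamma>1 \<tau>"
  shows "depth n (bd_image \<Gamma>1 \<tau> p) = depth n (fst p)"
proof -
  have "depth n ((tau_ext \<Gamma>1 \<tau> ^^ k) \<beta>) = depth n \<beta>"
    if "\<forall>j<k. (tau_ext \<Gamma>1 \<tau> ^^ j) \<beta> \<in> zspan \<Gamma>1" for k \<beta>
    using that by (induction k) (simp_all add: tau_ext_depth)
  then show ?thesis using assms by (auto simp: bd_pairs_def bd_image_def)
qed

lemma bd_image_root:
  assumes "p \<in> bd_pairs n \<Gamma>1 \<tau>" "rootvec n (\<lambda>m. - bd_image \<Gamma>1 \<tau> p m) s t \<noteq> 0"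
  shows "t < s \<and> bd_image \<Gamma>1 \<tau> p = epsd t s"
proof -
  from rootvec_nonzero[OF assms(2)]
  have st: "s < n" "t < n" "(\<lambda>m. - bd_image \<Gamma>1 \<tau> p m) = epsd s t" by auto
  have img: "bd_image \<Gamma>1 \<tau> p = epsd t s"
  proof
    fix m
    show "bd_image \<Gamma>1 \<tau> p m = epsd t s m"
      using fun_cong[OF st(3), of m] by (simp add: epsd_apply)
  qed
  obtain a b where ab: "a < b" "b < n" "fst p = epsd a b"
    using assms(1) by (auto simp: bd_pairs_def pos_roots_epsd)
  have "int t - int s = int a - int b"
    using bd_image_depth[OF assms(1)] img ab st by (simp add: depth_epsd)
  then show ?thesis using ab(1) img by linarith
qed

text \<open>Passing from \<open>\<beta>\<close> to \<open>\<tau>\<^sup>k(\<beta>)\<close> strictly shortens the \<open>\<tau>\<close>-string: every exponent \<open>k'\<close>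
  admissible for \<open>\<tau>\<^sup>k(\<beta>)\<close> gives the exponent \<open>k + k'\<close> for \<open>\<beta>\<close>, and \<open>k\<close> itself is lost.\<close>
lemma bd_len_image_less:
  assumes fin: "finite (bd_pairs n \<Gamma>1 \<tau>)" and p: "p \<in> bd_pairs n \<Gamma>1 \<tau>"
  shows "bd_len n \<Gamma>1 \<tau> (bd_image \<Gamma>1 \<tau> p) < bd_len n \<Gamma>1 \<tau> (fst p)"
proof -
  obtain \<beta> k where pe: "p = (\<beta>, k)" by (cases p)
  let ?te = "tau_ext \<Gamma>1 \<tau>" and ?B = "bd_pairs n \<Gamma>1 \<tau>"
  define \<gamma> where "\<gamma> = (?te ^^ k) \<beta>"
  have bp: "1 \<le> k" "\<forall>j<k. (?te ^^ j) \<beta> \<in> zspan \<Gamma>1"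
    using p pe by (auto simp: bd_pairs_def)
  let ?K\<beta> = "{k. (\<beta>, k) \<in> ?B}" and ?K\<gamma> = "{k. (\<gamma>, k) \<in> ?B}"
  have fin\<beta>: "finite ?K\<beta>"
    using fin by (rule finite_subset[rotated, OF finite_imageI[of _ snd]]) force
  have shift: "(\<lambda>k'. k + k') ` ?K\<gamma> \<subseteq> ?K\<beta> - {k}"
  proof
    fix x assume "x \<in> (\<lambda>k'. k + k') ` ?K\<gamma>"
    then obtain k' where x: "x = k + k'" and k': "(\<gamma>, k') \<in> ?B" by auto
    then have g: "1 \<le> k'" "\<forall>j<k'. (?te ^^ j) \<gamma> \<in> zspan \<Gamma>1" by (auto simp: bd_pairs_def)
    have "(?te ^^ j) \<beta> \<in> zspan \<Gamma>1" if "j < k + k'" for j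
    proof (cases "j < k")
      case False
      then have "(?te ^^ j) \<beta> = (?te ^^ (j - k)) \<gamma>"
        unfolding \<gamma>_def by (metis funpow_add le_add_diff_inverse2 not_less o_apply)
      then show ?thesis using g that False by auto
    qed (use bp in auto)
    then show "x \<in> ?K\<beta> - {k}" using p pe g x by (auto simp: bd_pairs_def)
  qed
  have "card ?K\<gamma> = card ((\<lambda>k'. k + k') ` ?K\<gamma>)" by (simp add: card_image)
  also have "\<dots> \<le> card (?K\<beta> - {k})" using shift fin\<beta> by (intro card_mono) auto
  also have "\<dots> < card ?K\<beta>" using fin\<beta> p pe by (intro card_Diff1_less) auto
  finally show ?thesis by (simp add: bd_len_def pe bd_image_def \<gamma>_def)
qed

lemma bd_low_support:
  assumes "bd_low n \<Gamma>1 \<tau> x s t \<noteq> 0"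
  shows "t < s \<and> (\<exists>i j. (j,i) \<in> below n \<and> x $$ (j,i) \<noteq> 0 \<and>
           bd_len n \<Gamma>1 \<tau> (epsd t s) < bd_len n \<Gamma>1 \<tau> (epsd i j))"
proof -
  have fin: "finite (bd_pairs n \<Gamma>1 \<tau>)" using assms sum.infinite unfolding bd_low_def by blast
  obtain p where p: "p \<in> bd_pairs n \<Gamma>1 \<tau>"
    and nz: "trace_pair n (rootvec n (fst p)) x * rootvec n (\<lambda>m. - bd_image \<Gamma>1 \<tau> p m) s t \<noteq> 0"
    using sum.not_neutral_contains_not_neutral[OF assms[unfolded bd_low_def]] by blast
  then have pair: "trace_pair n (rootvec n (fst p)) x \<noteq> 0"
    and img: "rootvec n (\<lambda>m. - bd_image \<Gamma>1 \<tau> p m) s t \<noteq> 0" by auto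
  obtain i j where ij: "i < n" "j < n" "rootvec n (fst p) i j \<noteq> 0" "x $$ (j,i) \<noteq> 0"
    using trace_pair_nonzero[OF pair] by blast
  have "i < j" "fst p = epsd i j" using bd_pair_root[OF p ij(3)] by auto
  moreover have "t < s" "bd_image \<Gamma>1 \<tau> p = epsd t s" using bd_image_root[OF p img] by auto
  moreover have "bd_len n \<Gamma>1 \<tau> (bd_image \<Gamma>1 \<tau> p) < bd_len n \<Gamma>1 \<tau> (fst p)"
    by (rule bd_len_image_less[OF fin p])
  ultimately show ?thesis using ij by (auto simp: below_def)
qed

lemma bd_up_support:
  assumes "bd_up n \<Gamma>1 \<tau> x s t \<noteq> 0"
  shows "s < t \<and> (\<exists>i j. (j,i) \<in> above n \<and> x $$ (j,i) \<noteq> 0 \<and>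
           bd_len n \<Gamma>1 \<tau> (epsd j i) < bd_len n \<Gamma>1 \<tau> (epsd s t))"
proof -
  have fin: "finite (bd_pairs n \<Gamma>1 \<tau>)" using assms sum.infinite unfolding bd_up_def by blast
  obtain p where p: "p \<in> bd_pairs n \<Gamma>1 \<tau>"
    and nz: "trace_pair n (rootvec n (\<lambda>m. - bd_image \<Gamma>1 \<tau> p m)) x * rootvec n (fst p) s t \<noteq> 0"
    using sum.not_neutral_contains_not_neutral[OF assms[unfolded bd_up_def]] by blast
  then have pair: "trace_pair n (rootvec n (\<lambda>m. - bd_image \<Gamma>1 \<tau> p m)) x \<noteq> 0"
    and root: "rootvec n (fst p) s t \<noteq> 0" by auto
  obtain i j where ij: "i < n" "j < n" "rootvec n (\<lambda>m. - bd_image \<Gamma>1 \<tau> p m) i j \<noteq> 0" "x $$ (j,i) \<noteq> 0"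
    using trace_pair_nonzero[OF pair] by blast
  have "j < i" "bd_image \<Gamma>1 \<tau> p = epsd j i" using bd_image_root[OF p ij(3)] by auto
  moreover have "s < t" "fst p = epsd s t" using bd_pair_root[OF p root] by auto
  moreover have "bd_len n \<Gamma>1 \<tau> (bd_image \<Gamma>1 \<tau> p) < bd_len n \<Gamma>1 \<tau> (fst p)"
    by (rule bd_len_image_less[OF fin p])
  ultimately show ?thesis using ij by (auto simp: above_def)
qed

lemma contract_rBD_below:
  assumes "t < s" "s < n"
  shows "contract n (rBD n \<Gamma>1 \<tau> c) x $$ (s,t) = x $$ (s,t) + bd_low n \<Gamma>1 \<tau> x s t"
proof -
  have "bd_up n \<Gamma>1 \<tau> x s t = 0" using bd_up_support[of x s t] assms by (cases "bd_up n \<Gamma>1 \<tau> x s t = 0") auto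
  then show ?thesis using assms by (simp add: contract_rBD_entry)
qed

lemma contract_rBD_above:
  assumes "s < t" "t < n"
  shows "contract n (rBD n \<Gamma>1 \<tau> c) x $$ (s,t) = - bd_up n \<Gamma>1 \<tau> x s t"
proof -
  have "bd_low n \<Gamma>1 \<tau> x s t = 0" using bd_low_support[of x s t] assms by (cases "bd_low n \<Gamma>1 \<tau> x s t = 0") auto
  then show ?thesis using assms by (simp add: contract_rBD_entry)
qed

lemma contract_rBD_diag:
  assumes "s < n"
  shows "contract n (rBD n \<Gamma>1 \<tau> c) x $$ (s,s) = (\<Sum>i<n. c i s * x $$ (i,i))"
proof -
  have "bd_low n \<Gamma>1 \<tau> x s s = 0" using bd_low_support[of x s s] by (cases "bd_low n \<Gamma>1 \<tau> x s s = 0") auto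
  moreover have "bd_up n \<Gamma>1 \<tau> x s s = 0" using bd_up_support[of x s s] by (cases "bd_up n \<Gamma>1 \<tau> x s s = 0") auto
  ultimately show ?thesis using assms by (simp add: contract_rBD_entry)
qed

lemma bd_low_vanishes:
  assumes "vanishes_on (below n) x"
  shows "bd_low n \<Gamma>1 \<tau> x s t = 0"
proof (rule ccontr)
  assume "bd_low n \<Gamma>1 \<tau> x s t \<noteq> 0"
  then obtain i j where "(j,i) \<in> below n" "x $$ (j,i) \<noteq> 0" using bd_low_support by blast
  then show False using assms by (auto simp: vanishes_on_def)
qed

lemma bd_up_vanishes:
  assumes "vanishes_on (above n) x"
  shows "bd_up n \<Gamma>1 \<tau> x s t = 0"
proof (rule ccontr)
  assume "bd_up n \<Gamma>1 \<tau> x s t \<noteq> 0"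
  then obtain i j where "(j,i) \<in> above n" "x $$ (j,i) \<noteq> 0" using bd_up_support by blast
  then show False using assms by (auto simp: vanishes_on_def)
qed

lemma diag_sum_vanishes:
  fixes x :: "kbar mat"
  assumes "vanishes_on (diag_pos n) x"
  shows "(\<Sum>i<n. c i s * x $$ (i,i)) = 0"
  using assms by (intro sum.neutral) (auto simp: vanishes_on_def diag_pos_def)

lemma contract_rBD_strictly_upper:
  assumes x: "vanishes_on (below n \<union> diag_pos n) x"
  shows "vanishes_on (below n \<union> diag_pos n) (contract n (rBD n \<Gamma>1 \<tau> c) x)"
proof -
  have low: "vanishes_on (below n) x" and dg: "vanishes_on (diag_pos n) x"
    using x by (simp_all add: vanishes_on_Un)
  have "contract n (rBD n \<Gamma>1 \<tau> c) x $$ (s,t) = 0" if "t < s" "s < n" for s t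
  proof -
    have "x $$ (s,t) = 0" using low that by (simp add: vanishes_on_def below_def)
    then show ?thesis using that by (simp add: contract_rBD_below bd_low_vanishes[OF low])
  qed
  moreover have "contract n (rBD n \<Gamma>1 \<tau> c) x $$ (s,s) = 0" if "s < n" for s
    using that by (simp add: contract_rBD_diag diag_sum_vanishes[OF dg])
  ultimately show ?thesis by (auto simp: vanishes_on_def below_def diag_pos_def)
qed

lemma contract_rBD_minus_strictly_lower:
  assumes x: "x \<in> carrier_mat n n" "vanishes_on (above n \<union> diag_pos n) x"
  shows "vanishes_on (above n \<union> diag_pos n) (contract n (rBD n \<Gamma>1 \<tau> c) x - x)"
proof -
  have up: "vanishes_on (above n) x" and dg: "vanishes_on (diag_pos n) x"
    using x(2) by (simp_all add: vanishes_on_Un)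
  have "(contract n (rBD n \<Gamma>1 \<tau> c) x - x) $$ (s,t) = 0" if "s < t" "t < n" for s t
  proof -
    have "x $$ (s,t) = 0" using up that by (simp add: vanishes_on_def above_def)
    then show ?thesis using that x(1) by (simp add: contract_rBD_above bd_up_vanishes[OF up])
  qed
  moreover have "(contract n (rBD n \<Gamma>1 \<tau> c) x - x) $$ (s,s) = 0" if "s < n" for s
  proof -
    have "x $$ (s,s) = 0" using dg that by (simp add: vanishes_on_def diag_pos_def)
    then show ?thesis using that x(1) by (simp add: contract_rBD_diag diag_sum_vanishes[OF dg])
  qed
  ultimately show ?thesis by (auto simp: vanishes_on_def above_def diag_pos_def)
qed

text \<open>On strictly upper triangular matrices the contraction of \<open>r\<^sub>B\<^sub>D\<close> is nilpotent: it only
  moves entries to roots with longer \<open>\<tau>\<close>-strings, whose length is bounded.\<close>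
lemma contract_rBD_nilpotent:
  assumes "x \<in> carrier_mat n n" "vanishes_on (below n \<union> diag_pos n) x"
  shows "\<exists>N. (contract n (rBD n \<Gamma>1 \<tau> c) ^^ N) x = 0\<^sub>m n n"
proof -
  let ?F = "contract n (rBD n \<Gamma>1 \<tau> c)" and ?\<mu> = "\<lambda>(s,t). bd_len n \<Gamma>1 \<tau> (epsd s t)"
  let ?I = "\<lambda>y. y \<in> carrier_mat n n \<and> vanishes_on (below n \<union> diag_pos n) y"
  obtain N where N: "\<forall>s<n. \<forall>t<n. bd_len n \<Gamma>1 \<tau> (epsd s t) < N" using bd_len_bounded by blast
  have raise: "\<exists>q'\<in>above n. y $$ q' \<noteq> 0 \<and> ?\<mu> q' < ?\<mu> q"
    if q_above: "q \<in> above n" and nz: "?F y $$ q \<noteq> 0" for y q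
  proof -
    obtain s t where q: "q = (s,t)" "s < t" "t < n" using q_above by (auto simp: above_def)
    then have "bd_up n \<Gamma>1 \<tau> y s t \<noteq> 0" using nz by (simp add: contract_rBD_above)
    then obtain i j where "(j,i) \<in> above n" "y $$ (j,i) \<noteq> 0"
      "bd_len n \<Gamma>1 \<tau> (epsd j i) < bd_len n \<Gamma>1 \<tau> (epsd s t)" using bd_up_support by blast
    then show ?thesis using q by (intro bexI[of _ "(j,i)"]) auto
  qed
  have "?I ((?F ^^ N) x) \<and> vanishes_on (above n) ((?F ^^ N) x)"
  proof (rule iterate_vanishes_on[where I = ?I and F = ?F and S = "above n" and \<mu> = ?\<mu>])
    show "?I y \<Longrightarrow> ?I (?F y)" for y by (simp add: contract_rBD_strictly_upper)
    show "\<exists>q'\<in>above n. y $$ q' \<noteq> 0 \<and> ?\<mu> q' < ?\<mu> q"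
      if "q \<in> above n" "?F y $$ q \<noteq> 0" for y q using that by (rule raise)
    show "?\<mu> q < N" if "q \<in> above n" for q using that N by (auto simp: above_def)
  qed (use assms in simp)
  then have "(?F ^^ N) x \<in> carrier_mat n n"
    "vanishes_on (below n \<union> diag_pos n \<union> above n) ((?F ^^ N) x)"
    by (simp_all add: vanishes_on_Un)
  then show ?thesis using zero_mat_by_positions by blast
qed

text \<open>Dually, \<open>r\<^sub>B\<^sub>D - id\<close> is nilpotent on strictly lower triangular matrices: it moves entries
  to roots with shorter \<open>\<tau>\<close>-strings.\<close>
lemma contract_rBD_minus_nilpotent:
  assumes "x \<in> carrier_mat n n" "vanishes_on (above n \<union> diag_pos n) x"
  shows "\<exists>N. ((\<lambda>y. contract n (rBD n \<Gamma>1 \<tau> c) y - y) ^^ N) x = 0\<^sub>m n n"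
proof -
  let ?G = "\<lambda>y. contract n (rBD n \<Gamma>1 \<tau> c) y - y"
  let ?I = "\<lambda>y. y \<in> carrier_mat n n \<and> vanishes_on (above n \<union> diag_pos n) y"
  obtain N where N: "\<forall>s<n. \<forall>t<n. bd_len n \<Gamma>1 \<tau> (epsd s t) < N" using bd_len_bounded by blast
  let ?\<mu> = "\<lambda>(s,t). N - bd_len n \<Gamma>1 \<tau> (epsd t s)"
  have raise: "\<exists>q'\<in>below n. y $$ q' \<noteq> 0 \<and> ?\<mu> q' < ?\<mu> q"
    if y: "y \<in> carrier_mat n n" and q_below: "q \<in> below n" and nz: "?G y $$ q \<noteq> 0" for y q
  proof -
    obtain s t where q: "q = (s,t)" "t < s" "s < n" using q_below by (auto simp: below_def)
    have "?G y $$ (s,t) = bd_low n \<Gamma>1 \<tau> y s t" using y q by (simp add: contract_rBD_below)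
    then have "bd_low n \<Gamma>1 \<tau> y s t \<noteq> 0" using nz q by simp
    then obtain i j where ji: "(j,i) \<in> below n" "y $$ (j,i) \<noteq> 0"
      "bd_len n \<Gamma>1 \<tau> (epsd t s) < bd_len n \<Gamma>1 \<tau> (epsd i j)" using bd_low_support by blast
    moreover have "bd_len n \<Gamma>1 \<tau> (epsd i j) < N" using N ji(1) by (auto simp: below_def)
    ultimately show ?thesis using q by (intro bexI[of _ "(j,i)"]) auto
  qed
  have "?I ((?G ^^ Suc N) x) \<and> vanishes_on (below n) ((?G ^^ Suc N) x)"
  proof (rule iterate_vanishes_on[where I = ?I and F = ?G and S = "below n" and \<mu> = ?\<mu>])
    show "?I y \<Longrightarrow> ?I (?G y)" for y
      by (simp add: contract_rBD_minus_strictly_lower minus_carrier_mat)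
    show "\<exists>q'\<in>below n. y $$ q' \<noteq> 0 \<and> ?\<mu> q' < ?\<mu> q"
      if "?I y" "q \<in> below n" "?G y $$ q \<noteq> 0" for y q using that by (intro raise) simp_all
    show "?\<mu> q < Suc N" for q by (cases q) simp
  qed (use assms in simp)
  then have "(?G ^^ Suc N) x \<in> carrier_mat n n"
    "vanishes_on (below n \<union> diag_pos n \<union> above n) ((?G ^^ Suc N) x)"
    by (simp_all only: vanishes_on_Un)
  then show ?thesis using zero_mat_by_positions by blast
qed

lemma contract_rBD_reflects_below:
  assumes "vanishes_on (below n) (contract n (rBD n \<Gamma>1 \<tau> c) z)"
  shows "vanishes_on (below n) z"
proof -
  obtain N where N: "\<forall>s<n. \<forall>t<n. bd_len n \<Gamma>1 \<tau> (epsd s t) < N" using bd_len_bounded by blast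
  let ?\<mu> = "\<lambda>(s,t). N - bd_len n \<Gamma>1 \<tau> (epsd t s)"
  show ?thesis
  proof (rule vanishes_on_by_descent[where \<mu> = ?\<mu>])
    fix q assume q_below: "q \<in> below n" and nz: "z $$ q \<noteq> 0"
    then obtain s t where q: "q = (s,t)" "t < s" "s < n" by (auto simp: below_def)
    have "contract n (rBD n \<Gamma>1 \<tau> c) z $$ (s,t) = 0"
      using assms q by (simp add: vanishes_on_def below_def)
    then have "bd_low n \<Gamma>1 \<tau> z s t = - z $$ (s,t)"
      using q by (simp add: contract_rBD_below add_eq_0_iff)
    then have "bd_low n \<Gamma>1 \<tau> z s t \<noteq> 0" using nz q by simp
    then obtain i j where ji: "(j,i) \<in> below n" "z $$ (j,i) \<noteq> 0"
      "bd_len n \<Gamma>1 \<tau> (epsd t s) < bd_len n \<Gamma>1 \<tau> (epsd i j)" using bd_low_support by blast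
    moreover have "bd_len n \<Gamma>1 \<tau> (epsd i j) < N" using N ji(1) by (auto simp: below_def)
    ultimately show "\<exists>q'\<in>below n. z $$ q' \<noteq> 0 \<and> ?\<mu> q' < ?\<mu> q"
      using q by (intro bexI[of _ "(j,i)"]) auto
  qed
qed

lemma contract_rBD_minus_reflects_above:
  assumes z: "z \<in> carrier_mat n n"
    and van: "vanishes_on (above n) (contract n (rBD n \<Gamma>1 \<tau> c) z - z)"
  shows "vanishes_on (above n) z"
proof (rule vanishes_on_by_descent[where \<mu> = "\<lambda>(s,t). bd_len n \<Gamma>1 \<tau> (epsd s t)"])
  fix q assume q_above: "q \<in> above n" and nz: "z $$ q \<noteq> 0"
  then obtain s t where q: "q = (s,t)" "s < t" "t < n" by (auto simp: above_def)
  have "(contract n (rBD n \<Gamma>1 \<tau> c) z - z) $$ (s,t) = 0"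
    using van q by (simp add: vanishes_on_def above_def)
  then have "- bd_up n \<Gamma>1 \<tau> z s t - z $$ (s,t) = 0"
    using z q by (simp add: contract_rBD_above)
  then have "bd_up n \<Gamma>1 \<tau> z s t \<noteq> 0" using nz q by auto
  then obtain i j where "(j,i) \<in> above n" "z $$ (j,i) \<noteq> 0"
    "bd_len n \<Gamma>1 \<tau> (epsd j i) < bd_len n \<Gamma>1 \<tau> (epsd s t)" using bd_up_support by blast
  then show "\<exists>q'\<in>above n. z $$ q' \<noteq> 0 \<and>
      (\<lambda>(s,t). bd_len n \<Gamma>1 \<tau> (epsd s t)) q' < (\<lambda>(s,t). bd_len n \<Gamma>1 \<tau> (epsd s t)) q"
    using q by (intro bexI[of _ "(j,i)"]) auto
qed

section \<open>Elements of the centralizer are diagonal\<close>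

context
  fixes c :: "nat \<Rightarrow> nat \<Rightarrow> kbar" and A B :: "kbar mat"
  assumes A: "A \<in> carrier_mat n n" and B: "B \<in> carrier_mat n n" and BA: "B * A = 1\<^sub>m n"
    and invariant: "Ad2 n A B (rBD n \<Gamma>1 \<tau> c) = rBD n \<Gamma>1 \<tau> c"
begin

lemma conj_carrier: "x \<in> carrier_mat n n \<Longrightarrow> A * x * B \<in> carrier_mat n n"
  using A B by auto

lemma contract_minus_conj:
  assumes x: "x \<in> carrier_mat n n"
  shows "contract n (rBD n \<Gamma>1 \<tau> c) (A * x * B) - A * x * B
       = A * (contract n (rBD n \<Gamma>1 \<tau> c) x - x) * B"
proof -
  let ?F = "contract n (rBD n \<Gamma>1 \<tau> c)"
  have "A * (?F x - x) * B = (A * ?F x - A * x) * B"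
    using A x by (subst mult_minus_distrib_mat[of _ n n]) auto
  also have "\<dots> = A * ?F x * B - A * x * B"
    using A B x by (subst minus_mult_distrib_mat[of _ n n]) auto
  finally show ?thesis using contract_conj[OF A B BA invariant x] by simp
qed

lemma conj_unit_above:
  assumes "a < b" "b < n"
  shows "vanishes_on (below n \<union> diag_pos n) (A * emat n a b * B)"
proof -
  let ?F = "contract n (rBD n \<Gamma>1 \<tau> c)" and ?E = "emat n a b :: kbar mat"
  have y: "A * ?E * B \<in> carrier_mat n n" by (simp add: conj_carrier)
  have "vanishes_on (below n \<union> diag_pos n) ?E"
    using assms by (auto simp: vanishes_on_def below_def diag_pos_def emat_index)
  then obtain N where "(?F ^^ N) ?E = 0\<^sub>m n n" using contract_rBD_nilpotent[OF emat_carrier] by blast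
  moreover have "(?F ^^ N) (A * ?E * B) = A * (?F ^^ N) ?E * B"
    by (rule funpow_commute_on[where C = "carrier_mat n n"])
      (auto simp: contract_conj[OF A B BA invariant])
  ultimately have "vanishes_on (below n) ((?F ^^ N) (A * ?E * B))"
    using A B by (auto simp: vanishes_on_def below_def)
  then have "vanishes_on (below n) (A * ?E * B)"
    by (rule funpow_reflects[where C = "carrier_mat n n", rotated 2, OF y])
      (auto intro: contract_rBD_reflects_below)
  moreover have "vanishes_on (diag_pos n) (A * ?E * B)"
    using square_zero_triangular_diag[OF y conj_square_zero[OF A B BA emat_carrier emat_square]]
      calculation assms by simp
  ultimately show ?thesis by (simp add: vanishes_on_Un)
qed

lemma conj_unit_below:
  assumes "b < a" "a < n"
  shows "vanishes_on (above n \<union> diag_pos n) (A * emat n a b * B)"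
proof -
  let ?G = "\<lambda>y. contract n (rBD n \<Gamma>1 \<tau> c) y - y" and ?E = "emat n a b :: kbar mat"
  have y: "A * ?E * B \<in> carrier_mat n n" by (simp add: conj_carrier)
  have "vanishes_on (above n \<union> diag_pos n) ?E"
    using assms by (auto simp: vanishes_on_def above_def diag_pos_def emat_index)
  then obtain N where "(?G ^^ N) ?E = 0\<^sub>m n n" using contract_rBD_minus_nilpotent[OF emat_carrier] by blast
  moreover have "(?G ^^ N) (A * ?E * B) = A * (?G ^^ N) ?E * B"
    by (rule funpow_commute_on[where C = "carrier_mat n n"]) (auto simp: contract_minus_conj)
  ultimately have "vanishes_on (above n) ((?G ^^ N) (A * ?E * B))"
    using A B by (auto simp: vanishes_on_def above_def)
  then have "vanishes_on (above n) (A * ?E * B)"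
    by (rule funpow_reflects[where C = "carrier_mat n n", rotated 2, OF y])
      (auto intro: contract_rBD_minus_reflects_above)
  moreover have "vanishes_on (diag_pos n) (A * ?E * B)"
    using square_zero_triangular_diag[OF y conj_square_zero[OF A B BA emat_carrier emat_square]]
      calculation assms by simp
  ultimately show ?thesis by (simp add: vanishes_on_Un)
qed

text \<open>Conjugation by \<open>A\<close> turns \<open>A e\<^sub>a\<^sub>b\<close> into \<open>(A e\<^sub>a\<^sub>b A\<^sup>-\<^sup>1) A\<close>, which relates columns \<open>a\<close> and \<open>b\<close>
  of \<open>A\<close>.\<close>
lemma column_relation:
  assumes "a < n" "b < n" "i < n"
  shows "A $$ (i,a) = (A * emat n a b * B * A) $$ (i,b)"
proof -
  have "A * emat n a b * B * A = A * emat n a b * (B * A)"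
    by (rule assoc_mult_mat[of _ n n _ n _ n]) (use A B in auto)
  also have "\<dots> = A * emat n a b"
    unfolding BA by (rule right_mult_one_mat[of _ n n]) (use A in simp)
  finally have product: "A * emat n a b * B * A = A * emat n a b" .
  show ?thesis unfolding product by (rule mult_emat_column[OF A assms, symmetric])
qed

lemma centralizer_upper: "vanishes_on (below n) A"
proof (rule upper_triangular_by_shift[OF A])
  fix a assume "Suc a < n"
  then show "\<exists>y\<in>carrier_mat n n. vanishes_on (below n \<union> diag_pos n) y \<and>
      (\<forall>i<n. A $$ (i,a) = (y * A) $$ (i, Suc a))"
    using conj_unit_above[where a = a and b = "Suc a"] column_relation[where a = a and b = "Suc a"]
    by (intro bexI[of _ "A * emat n a (Suc a) * B"]) (auto simp: conj_carrier)
qed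

lemma centralizer_lower: "vanishes_on (above n) A"
proof (rule lower_triangular_by_shift[OF A])
  fix a assume "Suc a < n"
  then show "\<exists>y\<in>carrier_mat n n. vanishes_on (above n \<union> diag_pos n) y \<and>
      (\<forall>i<n. A $$ (i, Suc a) = (y * A) $$ (i,a))"
    using conj_unit_below[where a = "Suc a" and b = a] column_relation[where a = "Suc a" and b = a]
    by (intro bexI[of _ "A * emat n (Suc a) a * B"]) (auto simp: conj_carrier)
qed

end

end

theorem mainTheorem7:
  fixes n :: nat and \<Gamma>1 \<Gamma>2 :: "nat set" and \<tau> :: "nat \<Rightarrow> nat"
    and c :: "nat \<Rightarrow> nat \<Rightarrow> kbar" and M :: "kbar mat"
  assumes "admissible n \<Gamma>1 \<Gamma>2 \<tau>"
    and "r0_cond n \<Gamma>1 \<tau> c"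
    and "M \<in> centralizer n (rBD n \<Gamma>1 \<tau> c)"
  shows "diagonal_mat M"
proof -
  from assms(3) obtain B where M: "M \<in> carrier_mat n n" and B: "B \<in> carrier_mat n n"
    and inverse: "B * M = 1\<^sub>m n" and invariant: "Ad2 n M B (rBD n \<Gamma>1 \<tau> c) = rBD n \<Gamma>1 \<tau> c"
    by (auto simp: centralizer_def)
  have simple: "\<Gamma>1 \<subseteq> {0..<n-1}" "\<tau> ` \<Gamma>1 \<subseteq> {0..<n-1}"
    using assms(1) by (auto simp: admissible_def bij_betw_def)
  have "vanishes_on (below n) M" "vanishes_on (above n) M"
    using centralizer_upper[OF simple M B inverse invariant]
      centralizer_lower[OF simple M B inverse invariant] by auto
  then show ?thesis using diagonal_by_positions[OF M] by (simp add: vanishes_on_Un)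
qed

end
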